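(* Let $d>1$ be a non-integer rational number and $\mu\ge\lceil d\rceil -1$ an integer. Then the discounted-sum aggregate function $A\mapsto \mathrm{DS}(A,d)$ on $\{0,\dots,\mu\}^\omega$ is not $\omega$-regular under any integer base $\beta\ge2$.
   Context: $\mathrm{DS}(A,d)=\sum_{i\ge0}A[i]/d^i$. For an integer $\beta\ge2$ and $x\in\mathbb{R}$, $\mathrm{rep}(x,\beta)$ is the $\omega$-word consisting of the sign of $x$ ($+$ if $x\ge0$, $-$ otherwise) followed by the interleaving of $\mathrm{Int}(x,\beta)=z_0z_1\cdots\in\{0,\dots,\beta-1\}^*0^\omega$ and $\mathrm{Frac}(x,\beta)=f_1f_2\cdots\notin\{0,\dots,\beta-1\}^*(\beta-1)^\omega$, the unique words with $|x|=\sum_{i\ge0}z_i\beta^i+\sum_{i\ge1}f_i\beta^{-i}$; its alphabet is $\mathrm{AlphaRep}(\beta)=\{+,-\}\cup\{0,\dots,\beta-1\}$. A function $f:\Sigma^\omega\to\mathbb{R}$ is $\omega$-regular under base $\beta$ if there is a B\"uchi automaton over $\Sigma\times\mathrm{AlphaRep}(\beta)$ that accepts $(A,\mathrm{rep}(x,\beta))$ (read synchronously) iff $f(A)=x$, for all $A\in\Sigma^\omega$, $x\in\mathbb{R}$. *)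

theory Defs
  imports Complex_Main
begin

definition DS :: "(nat \<Rightarrow> nat) \<Rightarrow> real \<Rightarrow> real" where
  "DS A d = (\<Sum>i. real (A i) / d ^ i)"

datatype alpha_rep = Plus | Minus | Dig nat

definition alpha_rep_set :: "nat \<Rightarrow> alpha_rep set" where
  "alpha_rep_set \<beta> = {Plus, Minus} \<union> Dig ` {..<\<beta>}"

definition int_digits :: "real \<Rightarrow> nat \<Rightarrow> nat \<Rightarrow> nat" where
  "int_digits x \<beta> i = nat ((\<lfloor>\<bar>x\<bar>\<rfloor> div int \<beta> ^ i) mod int \<beta>)"

text \<open>Frac(x,beta): f_i (i \<ge> 1) is the i-th digit after the point of |x|, the greedy expansion,
  which is the unique one not ending in (beta-1)^omega.\<close>
definition frac_digits :: "real \<Rightarrow> nat \<Rightarrow> nat \<Rightarrow> nat" where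
  "frac_digits x \<beta> i = nat (\<lfloor>\<bar>x\<bar> * real \<beta> ^ i\<rfloor> mod int \<beta>)"

text \<open>rep(x,beta) = sign, z_0, f_1, z_1, f_2, z_2, ...\<close>
definition rep :: "real \<Rightarrow> nat \<Rightarrow> nat \<Rightarrow> alpha_rep" where
  "rep x \<beta> n =
     (if n = 0 then (if x \<ge> 0 then Plus else Minus)
      else if odd n then Dig (int_digits x \<beta> ((n - 1) div 2))
      else Dig (frac_digits x \<beta> (n div 2)))"

record 'a buchi =
  states :: "nat set"
  init :: "nat set"
  trans :: "(nat \<times> 'a \<times> nat) set"
  acc :: "nat set"

definition wf_buchi :: "'a set \<Rightarrow> 'a buchi \<Rightarrow> bool" where
  "wf_buchi \<Sigma> B \<longleftrightarrow> finite (states B) \<and> init B \<subseteq> states B \<and> acc B \<subseteq> states B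
     \<and> trans B \<subseteq> states B \<times> \<Sigma> \<times> states B"

definition buchi_accepts :: "'a buchi \<Rightarrow> (nat \<Rightarrow> 'a) \<Rightarrow> bool" where
  "buchi_accepts B w \<longleftrightarrow>
     (\<exists>r :: nat \<Rightarrow> nat. r 0 \<in> init B \<and> (\<forall>i. (r i, w i, r (Suc i)) \<in> trans B)
        \<and> (\<exists>\<^sub>\<infinity>i. r i \<in> acc B))"

definition omega_regular_fun :: "'s set \<Rightarrow> nat \<Rightarrow> ((nat \<Rightarrow> 's) \<Rightarrow> real) \<Rightarrow> bool" where
  "omega_regular_fun \<Sigma> \<beta> f \<longleftrightarrow>
     (\<exists>B :: ('s \<times> alpha_rep) buchi. wf_buchi (\<Sigma> \<times> alpha_rep_set \<beta>) B \<and>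
        (\<forall>A x. (\<forall>i. A i \<in> \<Sigma>) \<longrightarrow>
           (buchi_accepts B (\<lambda>i. (A i, rep x \<beta> i)) \<longleftrightarrow> f A = x)))"

end

theory Submission
  imports Defs "HOL-Library.FuncSet"
begin

text \<open>
  Write \<open>d = a/b\<close> in lowest terms; then \<open>b \<ge> 2\<close> and \<open>D = \<lfloor>d\<rfloor> < a\<close>.
  Distinct digit words \<open>u\<close> of length \<open>m\<close> over \<open>{0..D}\<close> have distinct values
  \<open>\<Sum>i<m. u i / d^i\<close>: clearing denominators gives \<open>\<Sum>i<m. c i * b^i * a^(m-i) = 0\<close>
  with \<open>\<bar>c i\<bar> < a\<close>, and coprimality forces every \<open>c i = 0\<close>.
  There are \<open>(D+1)^m\<close> such words, their values lie in a bounded interval, and \<open>D + 1 > d\<close>;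
  hence some window \<open>(x - d^-m, x]\<close> contains the values of more words than a given Buchi
  automaton has states. By the greedy expansion each of these prefixes extends to a word
  with discounted sum exactly \<open>x\<close>. All these words are accepted together with the one
  representation of \<open>x\<close>, so two accepting runs are in the same state after \<open>m\<close> letters;
  exchanging their prefixes gives an accepted word whose value is not \<open>x\<close>.
\<close>

definition DS_prefix :: "(nat \<Rightarrow> nat) \<Rightarrow> real \<Rightarrow> nat \<Rightarrow> real" where
  "DS_prefix A d m = (\<Sum>i<m. real (A i) / d ^ i)"

lemma summable_DS:
  assumes "d > 1" "\<And>i. A i \<le> K"
  shows "summable (\<lambda>i. real (A i) / d ^ i)"
proof (rule summable_comparison_test)
  show "\<exists>N. \<forall>n\<ge>N. norm (real (A n) / d ^ n) \<le> real K * (1/d) ^ n"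
    using assms by (auto intro!: divide_right_mono simp: power_divide)
  show "summable (\<lambda>n. real K * (1 / d) ^ n)"
    using assms by (intro summable_mult summable_geometric) auto
qed

lemma DS_prepend:
  assumes "d > 1" "\<And>i. t i \<le> K"
  shows "DS (\<lambda>i. if i < m then u i else t (i - m)) d = DS_prefix u d m + DS t d / d ^ m"
proof -
  let ?A = "\<lambda>i. if i < m then u i else t (i - m)"
  have "(\<lambda>i. real (t i) / d ^ i / d ^ m) sums (DS t d / d ^ m)"
    unfolding DS_def using summable_DS[OF assms] by (intro sums_divide summable_sums)
  moreover have "(\<lambda>i. real (?A (i + m)) / d ^ (i + m)) = (\<lambda>i. real (t i) / d ^ i / d ^ m)"
    by (auto simp: power_add)
  ultimately have "(\<lambda>i. real (?A i) / d ^ i) sums (DS t d / d ^ m + DS_prefix ?A d m)"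
    using sums_iff_shift[of "\<lambda>i. real (?A i) / d ^ i" m] by (simp add: DS_prefix_def)
  moreover have "DS_prefix ?A d m = DS_prefix u d m"
    by (simp add: DS_prefix_def)
  ultimately show ?thesis
    unfolding DS_def[of ?A] by (simp add: sums_iff)
qed

lemma DS_prefix_le:
  assumes "d > 1" "\<And>i. i < m \<Longrightarrow> u i \<le> D"
  shows "DS_prefix u d m \<le> real D * d / (d - 1)"
proof -
  have "DS_prefix u d m \<le> (\<Sum>i<m. real D * (1/d) ^ i)"
    unfolding DS_prefix_def using assms
    by (intro sum_mono) (auto intro!: divide_right_mono simp: power_divide)
  also have "\<dots> \<le> (\<Sum>i. real D * (1/d) ^ i)"
    using assms by (intro sum_le_suminf summable_mult summable_geometric) auto
  also have "\<dots> = real D * (1 / (1 - 1/d))"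
    using assms by (subst suminf_mult, simp) (subst suminf_geometric, auto)
  also have "\<dots> = real D * d / (d - 1)"
    using assms by (simp add: field_simps)
  finally show ?thesis .
qed

subsection \<open>Greedy expansions\<close>

text \<open>The remainder after \<open>k\<close> steps of the greedy expansion of \<open>y\<close> in base \<open>d\<close>,
  scaled by \<open>d\<^sup>k\<close>; its integer part is the \<open>k\<close>-th digit.\<close>

fun greedy_rem :: "real \<Rightarrow> real \<Rightarrow> nat \<Rightarrow> real" where
  "greedy_rem d y 0 = y"
| "greedy_rem d y (Suc k) = d * frac (greedy_rem d y k)"

lemma greedy_rem_bounds:
  assumes "0 \<le> y" "y < d" "d > 1"
  shows "0 \<le> greedy_rem d y k \<and> greedy_rem d y k < d"
  using assms by (induction k) (auto simp: frac_lt_1 less_le_trans[OF frac_lt_1])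

lemma greedy_rem_partial_sum:
  assumes "d > 1"
  shows "(\<Sum>i<k. of_int \<lfloor>greedy_rem d y i\<rfloor> / d ^ i) = y - greedy_rem d y k / d ^ k"
proof (induction k)
  case (Suc k)
  have "greedy_rem d y (Suc k) / d ^ Suc k = frac (greedy_rem d y k) / d ^ k"
    using assms by simp
  with Suc show ?case by (simp add: frac_def diff_divide_distrib)
qed simp

lemma DS_greedy_expansion:
  assumes "0 \<le> y" "y < d" "d > 1"
  shows "\<exists>A. (\<forall>i. A i \<le> nat \<lfloor>d\<rfloor>) \<and> DS A d = y"
proof (intro exI conjI allI)
  let ?r = "greedy_rem d y"
  define A where "A i = nat \<lfloor>?r i\<rfloor>" for i
  have bounds: "0 \<le> ?r k \<and> ?r k < d" for k
    using greedy_rem_bounds assms by blast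
  show "A i \<le> nat \<lfloor>d\<rfloor>" for i
    using bounds[of i] by (simp add: A_def floor_mono nat_mono)
  have "(\<lambda>k. ?r k / d ^ k) \<longlonglongrightarrow> 0"
  proof (rule real_tendsto_sandwich[where f="\<lambda>_. 0" and h="\<lambda>k. d * (1/d)^k"])
    show "\<forall>\<^sub>F k in sequentially. 0 \<le> ?r k / d ^ k"
      using bounds assms by auto
    have "?r k / d ^ k \<le> d * (1 / d) ^ k" for k
      using bounds[of k] assms by (simp add: power_divide divide_right_mono)
    then show "\<forall>\<^sub>F k in sequentially. ?r k / d ^ k \<le> d * (1 / d) ^ k"
      by simp
    show "(\<lambda>k. d * (1 / d) ^ k) \<longlonglongrightarrow> 0"
      using assms by (intro tendsto_mult_right_zero LIMSEQ_realpow_zero) auto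
  qed simp
  note lim = tendsto_diff[OF tendsto_const[of y] this]
  have "real (A i) = of_int \<lfloor>?r i\<rfloor>" for i
    using bounds[of i] by (simp add: A_def)
  then have "(\<lambda>i. real (A i) / d ^ i) sums y"
    using lim by (simp add: sums_def greedy_rem_partial_sum[OF assms(3)])
  then show "DS A d = y"
    unfolding DS_def by (simp add: sums_iff)
qed

lemma DS_greedy_completions:
  assumes "d > 1" "\<And>u. u \<in> F \<Longrightarrow> y u \<in> {0..<d}"
  shows "\<exists>t. \<forall>u\<in>F. (\<forall>i. t u i \<le> nat \<lfloor>d\<rfloor>) \<and> DS (t u) d = y u"
proof (rule bchoice, rule)
  fix u assume "u \<in> F"
  then have "0 \<le> y u" "y u < d"
    using assms(2) by auto
  then show "\<exists>t. (\<forall>i. t i \<le> nat \<lfloor>d\<rfloor>) \<and> DS t d = y u"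
    by (rule DS_greedy_expansion[OF _ _ assms(1)])
qed

subsection \<open>Injectivity of prefix values for rational non-integral bases\<close>

lemma coprime_power_sum_eq_0_imp_coeffs_eq_0:
  fixes p q :: int
  assumes "coprime p q" "\<forall>i<m. \<bar>c i\<bar> < p"
    and "(\<Sum>i<m. c i * q ^ i * p ^ (m - i)) = 0"
  shows "\<forall>i<m. c i = 0"
  using assms(2,3)
proof (induction m)
  case (Suc m)
  define S where "S = (\<Sum>i<m. c i * q ^ i * p ^ (m - i))"
  have c_m_lt: "\<bar>c m\<bar> < p"
    using Suc.prems(1) by simp
  have "(\<Sum>i<Suc m. c i * q ^ i * p ^ (Suc m - i)) = p * (c m * q ^ m + S)"
    unfolding S_def by (simp add: sum_distrib_left Suc_diff_le algebra_simps)
  with Suc.prems(2) have "p * (c m * q ^ m + S) = 0"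
    by simp
  moreover have "p \<noteq> 0"
    using c_m_lt by linarith
  ultimately have sum_eq: "c m * q ^ m = - S"
    by simp
  have "p dvd S"
    unfolding S_def by (intro dvd_sum dvd_mult dvd_power) auto
  then have "p dvd c m * q ^ m"
    unfolding sum_eq by simp
  then have "p dvd c m"
    using assms(1) by (simp add: coprime_dvd_mult_left_iff)
  have "c m = 0"
  proof (rule ccontr)
    assume "c m \<noteq> 0"
    with \<open>p dvd c m\<close> have "\<bar>p\<bar> \<le> \<bar>c m\<bar>"
      by (rule dvd_imp_le_int[rotated])
    with c_m_lt show False
      by linarith
  qed
  with sum_eq have "(\<Sum>i<m. c i * q ^ i * p ^ (m - i)) = 0"
    by (simp add: S_def)
  with Suc.IH Suc.prems(1) have "\<forall>i<m. c i = 0"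
    by simp
  with \<open>c m = 0\<close> show ?case
    using less_Suc_eq by auto
qed simp

lemma DS_prefix_inj_coprime:
  fixes a b :: int
  assumes "coprime a b" "b > 0" "d = of_int a / of_int b"
    and "\<And>i. i < m \<Longrightarrow> u i \<le> D" "\<And>i. i < m \<Longrightarrow> v i \<le> D" "int D < a"
    and "DS_prefix u d m = DS_prefix v d m"
  shows "\<forall>i<m. u i = v i"
proof -
  define c where "c i = int (u i) - int (v i)" for i
  have a_pos: "a > 0"
    using assms(6) by linarith
  have "of_int a ^ m * (real (u i) - real (v i)) / d ^ i = of_int (c i * b ^ i * a ^ (m - i))"
    if "i < m" for i
  proof -
    have "(of_int a :: real) ^ m = of_int a ^ i * of_int a ^ (m - i)"
      using that by (simp flip: power_add)
    moreover have "d ^ i = of_int a ^ i / of_int b ^ i"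
      by (simp add: assms(3) power_divide)
    ultimately show ?thesis
      using assms(2) a_pos by (simp add: c_def)
  qed
  then have "of_int a ^ m * (DS_prefix u d m - DS_prefix v d m)
      = of_int (\<Sum>i<m. c i * b ^ i * a ^ (m - i))"
    unfolding DS_prefix_def of_int_sum sum_subtractf[symmetric] sum_distrib_left
    by (intro sum.cong) (auto simp: diff_divide_distrib algebra_simps)
  then have "(of_int (\<Sum>i<m. c i * b ^ i * a ^ (m - i)) :: real) = 0"
    using assms(7) by simp
  then have "(\<Sum>i<m. c i * b ^ i * a ^ (m - i)) = 0"
    by (simp only: of_int_eq_0_iff)
  moreover have "\<forall>i<m. \<bar>c i\<bar> < a"
    using assms(4-6) by (force simp: c_def)
  ultimately have "\<forall>i<m. c i = 0"
    using coprime_power_sum_eq_0_imp_coeffs_eq_0[OF assms(1), of m c] by blast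
  then show ?thesis
    by (simp add: c_def)
qed

lemma DS_prefix_inj:
  assumes "d \<in> \<rat>" "d \<notin> \<int>" "d > 1"
    and "\<And>i. i < m \<Longrightarrow> u i \<le> nat \<lfloor>d\<rfloor>" "\<And>i. i < m \<Longrightarrow> v i \<le> nat \<lfloor>d\<rfloor>"
    and "DS_prefix u d m = DS_prefix v d m"
  shows "\<forall>i<m. u i = v i"
proof -
  obtain a b :: int where ab: "b > 0" "coprime a b" "d = of_int a / of_int b"
    using Rats_cases'[OF assms(1)] by metis
  have "b \<noteq> 1"
    using ab(3) assms(2) by auto
  with ab(1) have "d * 2 \<le> d * of_int b"
    using assms(3) by simp
  then have "d * 2 \<le> of_int a"
    using ab(1,3) by simp
  then have "int (nat \<lfloor>d\<rfloor>) < a"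
    using assms(3) by linarith
  then show ?thesis
    using DS_prefix_inj_coprime[OF ab(2,1,3)] assms(4-6) by blast
qed

subsection \<open>Many prefixes with values in a short window\<close>

lemma power_gt_mult_power:
  fixes a b C :: real
  assumes "0 < a" "a < b"
  shows "\<exists>m. C * a ^ m < b ^ m"
proof -
  obtain m where "C < (b / a) ^ m"
    using real_arch_pow[of "b / a" C] assms by auto
  then have "C * a ^ m < b ^ m"
    using assms(1) by (simp add: power_divide pos_less_divide_eq)
  then show ?thesis ..
qed

lemma ceiling_pigeonhole:
  fixes f :: "'a \<Rightarrow> real"
  assumes "finite U" "0 \<le> C" "\<And>u. u \<in> U \<Longrightarrow> f u \<in> {0..C}" "real n * (C + 2) < card U"
  shows "\<exists>K. n < card {u \<in> U. \<lceil>f u\<rceil> = K}"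
proof -
  let ?N = "\<lceil>C\<rceil>"
  have "(\<lambda>u. \<lceil>f u\<rceil>) \<in> U \<rightarrow> {0..?N}"
  proof
    fix u assume "u \<in> U"
    with assms(3) have "0 \<le> f u" "f u \<le> C"
      by auto
    then show "\<lceil>f u\<rceil> \<in> {0..?N}"
      by (simp add: ceiling_mono)
  qed
  then obtain K where K: "card ((\<lambda>u. \<lceil>f u\<rceil>) -` {K} \<inter> U) * card {0..?N} \<ge> card U"
    using pigeonhole_card[of _ U "{0..?N}"] assms(1,2) by auto
  have "0 \<le> ?N"
    using assms(2) by simp
  then have "real (card {0..?N}) = of_int ?N + 1"
    by simp
  also have "\<dots> \<le> C + 2"
    by linarith
  finally have "real n * card {0..?N} \<le> real n * (C + 2)"
    by (intro mult_left_mono) auto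
  with assms(4) have "real (n * card {0..?N}) < real (card U)"
    by simp
  then have "n * card {0..?N} < card U"
    by (simp only: of_nat_less_iff)
  with K have "n * card {0..?N} < card ((\<lambda>u. \<lceil>f u\<rceil>) -` {K} \<inter> U) * card {0..?N}"
    by linarith
  moreover have "(\<lambda>u. \<lceil>f u\<rceil>) -` {K} \<inter> U = {u \<in> U. \<lceil>f u\<rceil> = K}"
    by auto
  ultimately show ?thesis
    by auto
qed

lemma many_DS_prefixes_in_window:
  assumes "1 < d" "d < real D + 1"
  obtains m x F where "F \<subseteq> {..<m} \<rightarrow>\<^sub>E {..D}" "n < card F"
    "\<And>u. u \<in> F \<Longrightarrow> (x - DS_prefix u d m) * d ^ m \<in> {0..<1}"
proof -
  define c where "c = real D * d / (d - 1)"
  have "c \<ge> 0"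
    using assms(1) by (simp add: c_def)
  obtain m where m: "real n * (c + 2) * d ^ m < (real D + 1) ^ m"
    using power_gt_mult_power[of d "real D + 1"] assms by auto
  define U where "U = {..<m} \<rightarrow>\<^sub>E {..D}"
  have dm: "1 \<le> d ^ m"
    using assms(1) by simp
  have "finite U"
    unfolding U_def by (intro finite_PiE) auto
  have "0 \<le> c * d ^ m"
    using \<open>c \<ge> 0\<close> dm by simp
  have values_bounded: "DS_prefix u d m * d ^ m \<in> {0..c * d ^ m}" if "u \<in> U" for u
  proof -
    have "0 \<le> DS_prefix u d m" "DS_prefix u d m \<le> c"
      using that assms(1) DS_prefix_le[of d m u D]
      by (auto simp: U_def c_def DS_prefix_def PiE_iff intro!: sum_nonneg)
    then show ?thesis
      using dm by auto
  qed
  have "real n * (c * d ^ m + 2) < card U"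
  proof -
    have "real n * (c * d ^ m + 2) \<le> real n * (c + 2) * d ^ m"
      using dm by (simp add: algebra_simps mult_left_mono)
    with m show ?thesis
      by (simp add: U_def card_PiE add.commute)
  qed
  from ceiling_pigeonhole[where f = "\<lambda>u. DS_prefix u d m * d ^ m",
      OF \<open>finite U\<close> \<open>0 \<le> c * d ^ m\<close> values_bounded this]
  obtain K where K: "n < card {u \<in> U. \<lceil>DS_prefix u d m * d ^ m\<rceil> = K}" ..
  have "(of_int K / d ^ m - DS_prefix u d m) * d ^ m \<in> {0..<1}"
    if "\<lceil>DS_prefix u d m * d ^ m\<rceil> = K" for u
  proof -
    have "(of_int K / d ^ m - DS_prefix u d m) * d ^ m = of_int K - DS_prefix u d m * d ^ m"
      using assms(1) by (simp add: algebra_simps)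
    then show ?thesis
      using that ceiling_correct[of "DS_prefix u d m * d ^ m"] by simp
  qed
  with K show thesis
    by (intro that[of "{u \<in> U. \<lceil>DS_prefix u d m * d ^ m\<rceil> = K}" m "of_int K / d ^ m"])
      (auto simp: U_def)
qed

subsection \<open>Splicing accepting runs\<close>

lemma run_in_states:
  assumes "wf_buchi \<Sigma> B" "r 0 \<in> init B" "\<forall>i. (r i, w i, r (Suc i)) \<in> trans B"
  shows "r i \<in> states B"
  using assms by (cases i) (auto simp: wf_buchi_def)

lemma buchi_accepts_splice:
  assumes "ru 0 \<in> init B" "\<forall>i. (ru i, X i, ru (Suc i)) \<in> trans B"
    and "\<forall>i. (rv i, Y i, rv (Suc i)) \<in> trans B" "\<exists>\<^sub>\<infinity>i. rv i \<in> acc B"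
    and "ru m = rv m"
  shows "buchi_accepts B (\<lambda>i. if i < m then X i else Y i)"
  unfolding buchi_accepts_def
proof (intro exI[of _ "\<lambda>i. if i \<le> m then ru i else rv i"] conjI allI)
  show "(if 0 \<le> m then ru 0 else rv 0) \<in> init B"
    using assms(1) by simp
  show "((if i \<le> m then ru i else rv i), (if i < m then X i else Y i),
      (if Suc i \<le> m then ru (Suc i) else rv (Suc i))) \<in> trans B" for i
    using assms(2,3,5) by (cases "i < m"; cases "i = m"; auto)
  have "\<forall>\<^sub>\<infinity>i. i > m"
    by (simp add: cofinite_eq_sequentially eventually_gt_at_top)
  then have "\<forall>\<^sub>\<infinity>i. rv i \<in> acc B \<longrightarrow> (if i \<le> m then ru i else rv i) \<in> acc B"
    by (rule eventually_mono) auto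
  with assms(4) show "\<exists>\<^sub>\<infinity>i. (if i \<le> m then ru i else rv i) \<in> acc B"
    by (rule frequently_rev_mp)
qed

lemma buchi_accepts_splice_of_card_gt:
  assumes "wf_buchi \<Sigma> B" "card (states B) < card F"
    and "\<And>u. u \<in> F \<Longrightarrow> buchi_accepts B (w u)"
  obtains u v where "u \<in> F" "v \<in> F" "u \<noteq> v"
    "buchi_accepts B (\<lambda>i. if i < m then w u i else w v i)"
proof -
  have "\<forall>u\<in>F. \<exists>r. r 0 \<in> init B \<and> (\<forall>i. (r i, w u i, r (Suc i)) \<in> trans B)
      \<and> (\<exists>\<^sub>\<infinity>i. r i \<in> acc B)"
    using assms(3) by (simp add: buchi_accepts_def)
  then obtain run where run: "\<And>u. u \<in> F \<Longrightarrow> run u 0 \<in> init B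
      \<and> (\<forall>i. (run u i, w u i, run u (Suc i)) \<in> trans B) \<and> (\<exists>\<^sub>\<infinity>i. run u i \<in> acc B)"
    by metis
  have "run u m \<in> states B" if "u \<in> F" for u
    using run[OF that] run_in_states[OF assms(1), of "run u" "w u" m] by blast
  moreover have "finite (states B)"
    using assms(1) by (simp add: wf_buchi_def)
  ultimately have "card ((\<lambda>u. run u m) ` F) \<le> card (states B)"
    by (intro card_mono) auto
  with assms(2) have "\<not> inj_on (\<lambda>u. run u m) F"
    by (intro pigeonhole) simp
  then obtain u v where uv: "u \<in> F" "v \<in> F" "u \<noteq> v" "run u m = run v m"
    by (auto simp: inj_on_def)
  have "buchi_accepts B (\<lambda>i. if i < m then w u i else w v i)"
    using run[OF uv(1)] run[OF uv(2)] uv(4)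
    by (intro buchi_accepts_splice[where ru="run u" and rv="run v"]) auto
  with uv(1-3) show thesis
    by (rule that)
qed

subsection \<open>Level sets of the discounted sum\<close>

lemma DS_words_with_swappable_tails:
  assumes "d \<in> \<rat>" "d \<notin> \<int>" "d > 1"
  obtains F :: "(nat \<Rightarrow> nat) set" and W m x where "n < card F"
    "\<And>u v i. u \<in> F \<Longrightarrow> v \<in> F \<Longrightarrow> W u v i \<le> nat \<lfloor>d\<rfloor>"
    "\<And>u v. W u v = (\<lambda>i. if i < m then W u u i else W v v i)"
    "\<And>u v. u \<in> F \<Longrightarrow> v \<in> F \<Longrightarrow> DS (W u v) d = x \<longleftrightarrow> u = v"
proof -
  define D where "D = nat \<lfloor>d\<rfloor>"
  have "d < real D + 1"
    using assms(3) by (simp add: D_def)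
  then obtain m x F where F: "F \<subseteq> {..<m} \<rightarrow>\<^sub>E {..D}" "n < card F"
    and window: "\<And>u. u \<in> F \<Longrightarrow> (x - DS_prefix u d m) * d ^ m \<in> {0..<1}"
    by (rule many_DS_prefixes_in_window[OF assms(3)]) (rule that)
  have prefix_le: "u i \<le> D" if "u \<in> F" "i < m" for u i
    using that F(1) by (auto simp: PiE_iff)
  have "(x - DS_prefix u d m) * d ^ m \<in> {0..<d}" if "u \<in> F" for u
    using window[OF that] assms(3) by auto
  from DS_greedy_completions[OF assms(3) this] obtain tail
    where "\<forall>u\<in>F. (\<forall>i. tail u i \<le> D) \<and> DS (tail u) d = (x - DS_prefix u d m) * d ^ m"
    unfolding D_def ..
  then have tail_le: "\<And>u i. u \<in> F \<Longrightarrow> tail u i \<le> D"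
    and DS_tail: "\<And>u. u \<in> F \<Longrightarrow> DS (tail u) d = (x - DS_prefix u d m) * d ^ m"
    by auto
  define W where "W u v i = (if i < m then u i else tail v (i - m))" for u v i
  have DS_W: "DS (W u v) d = DS_prefix u d m + x - DS_prefix v d m"
    if "u \<in> F" "v \<in> F" for u v
  proof -
    have "DS (W u v) d = DS_prefix u d m + DS (tail v) d / d ^ m"
      unfolding W_def by (rule DS_prepend[OF assms(3), of "tail v" D]) (rule tail_le[OF that(2)])
    then show ?thesis
      using DS_tail[OF that(2)] assms(3) by simp
  qed
  show thesis
  proof (rule that[of F W m x])
    show "n < card F"
      by (fact F(2))
    show "W u v i \<le> nat \<lfloor>d\<rfloor>" if "u \<in> F" "v \<in> F" for u v i
      using prefix_le[OF that(1)] tail_le[OF that(2)] by (simp add: W_def D_def)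
    show "W u v = (\<lambda>i. if i < m then W u u i else W v v i)" for u v
      by (simp add: W_def fun_eq_iff)
    show "DS (W u v) d = x \<longleftrightarrow> u = v" if "u \<in> F" "v \<in> F" for u v
    proof
      assume "DS (W u v) d = x"
      then have "\<forall>i<m. u i = v i"
        using DS_W[OF that] prefix_le that
        by (intro DS_prefix_inj[OF assms(1-3)]) (auto simp: D_def)
      with F(1) that show "u = v"
        by (intro PiE_ext[of u "{..<m}" "\<lambda>_. {..D}" v]) auto
    qed (use DS_W that in simp)
  qed
qed

lemma DS_level_sets_not_buchi:
  fixes enc :: "real \<Rightarrow> nat \<Rightarrow> 'b"
  assumes "d \<in> \<rat>" "d \<notin> \<int>" "d > 1" "\<lfloor>d\<rfloor> \<le> int \<mu>" "wf_buchi \<Sigma> B"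
  shows "\<not> (\<forall>A x. (\<forall>i. A i \<in> {0..\<mu>}) \<longrightarrow>
           (buchi_accepts B (\<lambda>i. (A i, enc x i)) \<longleftrightarrow> DS A d = x))"
proof
  assume iff: "\<forall>A x. (\<forall>i. A i \<in> {0..\<mu>}) \<longrightarrow>
      (buchi_accepts B (\<lambda>i. (A i, enc x i)) \<longleftrightarrow> DS A d = x)"
  obtain F :: "(nat \<Rightarrow> nat) set" and W m x where F: "card (states B) < card F"
    and W_le: "\<And>u v i. u \<in> F \<Longrightarrow> v \<in> F \<Longrightarrow> W u v i \<le> nat \<lfloor>d\<rfloor>"
    and W_splice: "\<And>u v. W u v = (\<lambda>i. if i < m then W u u i else W v v i)"
    and DS_W: "\<And>u v. u \<in> F \<Longrightarrow> v \<in> F \<Longrightarrow> DS (W u v) d = x \<longleftrightarrow> u = v"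
    by (rule DS_words_with_swappable_tails[OF assms(1-3)]) (rule that)
  have accepts: "buchi_accepts B (\<lambda>i. (W u v i, enc x i)) \<longleftrightarrow> u = v"
    if "u \<in> F" "v \<in> F" for u v
  proof -
    have "nat \<lfloor>d\<rfloor> \<le> \<mu>"
      using assms(4) by simp
    then have "W u v i \<in> {0..\<mu>}" for i
      using W_le[OF that, of i] by simp
    then show ?thesis
      using iff[rule_format, of "W u v" x] DS_W[OF that] by simp
  qed
  then obtain u v where uv: "u \<in> F" "v \<in> F" "u \<noteq> v"
    and "buchi_accepts B (\<lambda>i. if i < m then (W u u i, enc x i) else (W v v i, enc x i))"
    using buchi_accepts_splice_of_card_gt[OF assms(5) F, where w="\<lambda>u i. (W u u i, enc x i)"]
    by blast
  moreover have "(\<lambda>i. if i < m then (W u u i, enc x i) else (W v v i, enc x i))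
      = (\<lambda>i. (W u v i, enc x i))"
    unfolding W_splice[of u v] by (simp add: fun_eq_iff)
  ultimately show False
    using accepts by simp
qed

theorem theorem8:
  fixes d :: real and \<mu> :: nat
  assumes "d \<in> \<rat>" and "d \<notin> \<int>" and "d > 1"
    and "int \<mu> \<ge> \<lceil>d\<rceil> - 1"
  shows "\<forall>\<beta>::nat. \<beta> \<ge> 2 \<longrightarrow> \<not> omega_regular_fun {0..\<mu>} \<beta> (\<lambda>A. DS A d)"
proof (intro allI impI notI)
  fix \<beta> :: nat
  have "d \<noteq> of_int \<lfloor>d\<rfloor>"
    using assms(2) by (metis Ints_of_int)
  with assms(4) have floor_le: "\<lfloor>d\<rfloor> \<le> int \<mu>"
    by (simp add: ceiling_altdef)
  assume "omega_regular_fun {0..\<mu>} \<beta> (\<lambda>A. DS A d)"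
  then obtain B where wf: "wf_buchi ({0..\<mu>} \<times> alpha_rep_set \<beta>) B"
    and "\<forall>A x. (\<forall>i. A i \<in> {0..\<mu>}) \<longrightarrow>
           (buchi_accepts B (\<lambda>i. (A i, rep x \<beta> i)) \<longleftrightarrow> DS A d = x)"
    unfolding omega_regular_fun_def by blast
  with DS_level_sets_not_buchi[OF assms(1-3) floor_le wf, where enc="\<lambda>x. rep x \<beta>"] show False
    by simp
qed

end
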